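(* Let $A,B,C\in\mathcal G$ be mutually adjacent. Then there is a star or a top containing $A$, $B$ and $C$.
   Context: $K$ is a (not necessarily commutative) field and $V$ is a left vector space over $K$ of arbitrary (possibly infinite) dimension with $\dim V>2$. $\mathcal G:=\{X\le V\mid X\cong V/X\}$, assumed nonempty. Two elements $X,Y\in\mathcal G$ are adjacent if $\dim((X+Y)/X)=\dim((X+Y)/Y)=1$. A star is a set $\mathcal G[M\rangle:=\{E\le V\mid M\le E,\ \dim(E/M)=1\}$, where $M\le V$ is a subspace for which some $X\in\mathcal G$ satisfies $M\le X$, $\dim(X/M)=1$. A top is a set $\mathcal G\langle N]:=\{E\le V\mid E\le N,\ \dim(N/E)=1\}$, where $N\le V$ is a subspace for which some $X\in\mathcal G$ satisfies $X\le N$, $\dim(N/X)=1$. *)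

theory Defs
  imports Main
begin

text \<open>A left vector space over a (not necessarily commutative) field, i.e. a division ring
  'k, carried by the whole type 'v, with scalar multiplication sc.\<close>

definition left_vs :: "('k::division_ring \<Rightarrow> 'v::ab_group_add \<Rightarrow> 'v) \<Rightarrow> bool" where
  "left_vs sc \<longleftrightarrow>
     (\<forall>k a b. sc k (a + b) = sc k a + sc k b) \<and>
     (\<forall>k l a. sc (k + l) a = sc k a + sc l a) \<and>
     (\<forall>k l a. sc (k * l) a = sc k (sc l a)) \<and>
     (\<forall>a. sc 1 a = a)"

definition subsp :: "('k::division_ring \<Rightarrow> 'v::ab_group_add \<Rightarrow> 'v) \<Rightarrow> 'v set \<Rightarrow> bool" where
  "subsp sc X \<longleftrightarrow> 0 \<in> X \<and> (\<forall>a\<in>X. \<forall>b\<in>X. a + b \<in> X) \<and> (\<forall>k. \<forall>a\<in>X. sc k a \<in> X)"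

definition ssum :: "'v::ab_group_add set \<Rightarrow> 'v set \<Rightarrow> 'v set" where
  "ssum X Y = {x + y | x y. x \<in> X \<and> y \<in> Y}"

text \<open>The span of two vectors; dim V > 2 means no two vectors span V.\<close>
definition span2 :: "('k::division_ring \<Rightarrow> 'v::ab_group_add \<Rightarrow> 'v) \<Rightarrow> 'v \<Rightarrow> 'v \<Rightarrow> 'v set" where
  "span2 sc a b = {sc k a + sc l b | k l. True}"

definition dim_gt2 :: "('k::division_ring \<Rightarrow> 'v::ab_group_add \<Rightarrow> 'v) \<Rightarrow> bool" where
  "dim_gt2 sc \<longleftrightarrow> (\<forall>a b. span2 sc a b \<noteq> UNIV)"

text \<open>The quotient space V/X: its elements are the cosets a + X, with the induced operations.\<close>
definition coset :: "'v::ab_group_add set \<Rightarrow> 'v \<Rightarrow> 'v set" where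
  "coset X a = {a + x | x. x \<in> X}"

definition quot :: "'v::ab_group_add set \<Rightarrow> 'v set set" where
  "quot X = range (coset X)"

definition qadd :: "'v::ab_group_add set \<Rightarrow> 'v set \<Rightarrow> 'v set" where
  "qadd A B = {u + w | u w. u \<in> A \<and> w \<in> B}"

definition qscale :: "('k::division_ring \<Rightarrow> 'v::ab_group_add \<Rightarrow> 'v) \<Rightarrow> 'v set \<Rightarrow> 'k \<Rightarrow> 'v set \<Rightarrow> 'v set" where
  "qscale sc X k A = {sc k u + x | u x. u \<in> A \<and> x \<in> X}"

definition iso_quot :: "('k::division_ring \<Rightarrow> 'v::ab_group_add \<Rightarrow> 'v) \<Rightarrow> 'v set \<Rightarrow> bool" where
  "iso_quot sc X \<longleftrightarrow> (\<exists>f. bij_betw f X (quot X) \<and>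
      (\<forall>a\<in>X. \<forall>b\<in>X. f (a + b) = qadd (f a) (f b)) \<and>
      (\<forall>k. \<forall>a\<in>X. f (sc k a) = qscale sc X k (f a)))"

definition GG :: "('k::division_ring \<Rightarrow> 'v::ab_group_add \<Rightarrow> 'v) \<Rightarrow> 'v set set" where
  "GG sc = {X. subsp sc X \<and> iso_quot sc X}"

text \<open>For subspaces M \<subseteq> E: dim(E/M) = 1, i.e. E/M has a basis consisting of one
  (nonzero) coset v + M.\<close>
definition codim1 :: "('k::division_ring \<Rightarrow> 'v::ab_group_add \<Rightarrow> 'v) \<Rightarrow> 'v set \<Rightarrow> 'v set \<Rightarrow> bool" where
  "codim1 sc M E \<longleftrightarrow> M \<subseteq> E \<and> (\<exists>v\<in>E. v \<notin> M \<and> E = {sc k v + m | k m. m \<in> M})"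

definition adjacent :: "('k::division_ring \<Rightarrow> 'v::ab_group_add \<Rightarrow> 'v) \<Rightarrow> 'v set \<Rightarrow> 'v set \<Rightarrow> bool" where
  "adjacent sc X Y \<longleftrightarrow> codim1 sc X (ssum X Y) \<and> codim1 sc Y (ssum X Y)"

definition star :: "('k::division_ring \<Rightarrow> 'v::ab_group_add \<Rightarrow> 'v) \<Rightarrow> 'v set \<Rightarrow> 'v set set" where
  "star sc M = {E. subsp sc E \<and> M \<subseteq> E \<and> codim1 sc M E}"

definition top :: "('k::division_ring \<Rightarrow> 'v::ab_group_add \<Rightarrow> 'v) \<Rightarrow> 'v set \<Rightarrow> 'v set set" where
  "top sc N = {E. subsp sc E \<and> E \<subseteq> N \<and> codim1 sc E N}"

definition is_star :: "('k::division_ring \<Rightarrow> 'v::ab_group_add \<Rightarrow> 'v) \<Rightarrow> 'v set set \<Rightarrow> bool" where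
  "is_star sc S \<longleftrightarrow> (\<exists>M. subsp sc M \<and> (\<exists>X\<in>GG sc. M \<subseteq> X \<and> codim1 sc M X) \<and> S = star sc M)"

definition is_top :: "('k::division_ring \<Rightarrow> 'v::ab_group_add \<Rightarrow> 'v) \<Rightarrow> 'v set set \<Rightarrow> bool" where
  "is_top sc S \<longleftrightarrow> (\<exists>N. subsp sc N \<and> (\<exists>X\<in>GG sc. X \<subseteq> N \<and> codim1 sc X N) \<and> S = top sc N)"

end

theory Submission
  imports Defs
begin

text \<open>Write A + B for the span of A and B. If C \<subseteq> A + B, then A + C and B + C are subspaces of
  A + B properly containing the hyperplanes A resp. B of A + B, so all three pairwise sums
  coincide and A, B, C all lie in the top of A + B. Otherwise pick c \<in> C outside A + B; every
  x \<in> A \<inter> B must lie in C, since otherwise A + C = C + Kx = B + C would contain A + B and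
  hence equal it, which is absurd. Thus A \<inter> B \<subseteq> B \<inter> C \<subset> B, and since A \<inter> B is a hyperplane
  of B this forces A \<inter> B = B \<inter> C, a hyperplane of C: all three lie in the star of A \<inter> B.\<close>

definition adjoin :: "('k::division_ring \<Rightarrow> 'v::ab_group_add \<Rightarrow> 'v) \<Rightarrow> 'v set \<Rightarrow> 'v \<Rightarrow> 'v set" where
  "adjoin sc M v = {sc k v + m | k m. m \<in> M}"

locale left_vector_space =
  fixes sc :: "'k::division_ring \<Rightarrow> 'v::ab_group_add \<Rightarrow> 'v"
  assumes left_vs: "left_vs sc"
begin

lemma scale_right_distrib: "sc k (a + b) = sc k a + sc k b"
  using left_vs unfolding left_vs_def by blast

lemma scale_left_distrib: "sc (k + l) a = sc k a + sc l a"
  using left_vs unfolding left_vs_def by blast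

lemma scale_scale: "sc (k * l) a = sc k (sc l a)"
  using left_vs unfolding left_vs_def by blast

lemma scale_one: "sc 1 a = a"
  using left_vs unfolding left_vs_def by blast

lemma scale_zero_right [simp]: "sc k 0 = 0"
  using scale_right_distrib[of k 0 0] by simp

lemma scale_zero_left [simp]: "sc 0 a = 0"
  using scale_left_distrib[of 0 0 a] by simp

lemma scale_minus_right: "sc k (- a) = - sc k a"
  using scale_right_distrib[of k "- a" a] by (simp add: eq_neg_iff_add_eq_0)

lemma scale_right_diff_distrib: "sc k (a - b) = sc k a - sc k b"
  using scale_right_distrib[of k a "- b"] scale_minus_right by simp

lemma scale_minus_left: "sc (- k) a = - sc k a"
  using scale_left_distrib[of "- k" k a] by (simp add: eq_neg_iff_add_eq_0)

lemma scale_inverse_cancel: "k \<noteq> 0 \<Longrightarrow> sc (inverse k) (sc k a) = a"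
  using scale_scale[of "inverse k" k a] by (simp add: scale_one)

lemma subsp_add: "subsp sc X \<Longrightarrow> a \<in> X \<Longrightarrow> b \<in> X \<Longrightarrow> a + b \<in> X"
  unfolding subsp_def by blast

lemma subsp_scale: "subsp sc X \<Longrightarrow> a \<in> X \<Longrightarrow> sc k a \<in> X"
  unfolding subsp_def by blast

lemma subsp_uminus: "subsp sc X \<Longrightarrow> a \<in> X \<Longrightarrow> - a \<in> X"
  using subsp_scale[of X a "- 1"] by (simp add: scale_minus_left scale_one)

lemma subsp_diff: "subsp sc X \<Longrightarrow> a \<in> X \<Longrightarrow> b \<in> X \<Longrightarrow> a - b \<in> X"
  using subsp_add subsp_uminus by (metis diff_conv_add_uminus)

lemma subsp_Int: "subsp sc X \<Longrightarrow> subsp sc Y \<Longrightarrow> subsp sc (X \<inter> Y)"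
  unfolding subsp_def by blast

lemma subsp_ssum:
  assumes X: "subsp sc X" and Y: "subsp sc Y"
  shows "subsp sc (ssum X Y)"
  unfolding subsp_def
proof (intro conjI ballI allI)
  show "0 \<in> ssum X Y"
    using X Y unfolding subsp_def ssum_def by force
next
  fix a b assume "a \<in> ssum X Y" "b \<in> ssum X Y"
  then obtain x1 y1 x2 y2 where "a = x1 + y1" "b = x2 + y2" "x1 \<in> X" "x2 \<in> X" "y1 \<in> Y" "y2 \<in> Y"
    unfolding ssum_def by blast
  moreover have "a + b = (x1 + x2) + (y1 + y2)" if "a = x1 + y1" "b = x2 + y2"
    using that by (simp add: algebra_simps)
  ultimately show "a + b \<in> ssum X Y"
    unfolding ssum_def using subsp_add[OF X] subsp_add[OF Y] by blast
next
  fix k a assume "a \<in> ssum X Y"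
  then obtain x y where "a = x + y" "x \<in> X" "y \<in> Y"
    unfolding ssum_def by blast
  then show "sc k a \<in> ssum X Y"
    unfolding ssum_def using scale_right_distrib subsp_scale[OF X] subsp_scale[OF Y] by blast
qed

lemma ssum_commute: "ssum X Y = ssum Y X"
  unfolding ssum_def by (auto simp: add.commute) (metis add.commute)+

lemma ssum_upper1: "subsp sc Y \<Longrightarrow> X \<subseteq> ssum X Y"
  unfolding ssum_def subsp_def by force

lemma ssum_upper2: "subsp sc X \<Longrightarrow> Y \<subseteq> ssum X Y"
  unfolding ssum_def subsp_def by force

lemma ssum_least: "subsp sc Z \<Longrightarrow> X \<subseteq> Z \<Longrightarrow> Y \<subseteq> Z \<Longrightarrow> ssum X Y \<subseteq> Z"
  unfolding ssum_def subsp_def by blast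

lemma ssum_absorb2: "subsp sc X \<Longrightarrow> subsp sc Y \<Longrightarrow> X \<subseteq> Y \<Longrightarrow> ssum X Y = Y"
  using ssum_upper2 ssum_least by blast

lemma subsp_adjoin:
  assumes M: "subsp sc M"
  shows "subsp sc (adjoin sc M v)"
  unfolding subsp_def
proof (intro conjI ballI allI)
  show "0 \<in> adjoin sc M v"
    using M unfolding adjoin_def subsp_def by (auto intro: exI[of _ 0])
next
  fix a b assume "a \<in> adjoin sc M v" "b \<in> adjoin sc M v"
  then obtain k1 m1 k2 m2 where "a = sc k1 v + m1" "b = sc k2 v + m2" "m1 \<in> M" "m2 \<in> M"
    unfolding adjoin_def by blast
  then show "a + b \<in> adjoin sc M v"
    unfolding adjoin_def using subsp_add[OF M]
    by (intro CollectI exI[of _ "k1 + k2"] exI[of _ "m1 + m2"])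
       (auto simp: algebra_simps scale_left_distrib)
next
  fix k a assume "a \<in> adjoin sc M v"
  then obtain l m where "a = sc l v + m" "m \<in> M"
    unfolding adjoin_def by blast
  then show "sc k a \<in> adjoin sc M v"
    unfolding adjoin_def using subsp_scale[OF M]
    by (intro CollectI exI[of _ "k * l"] exI[of _ "sc k m"])
       (auto simp: scale_right_distrib scale_scale)
qed

lemma adjoin_subset: "subsp sc E \<Longrightarrow> M \<subseteq> E \<Longrightarrow> v \<in> E \<Longrightarrow> adjoin sc M v \<subseteq> E"
  unfolding adjoin_def using subsp_add subsp_scale by blast

lemma codim1_iff_adjoin: "codim1 sc M E \<longleftrightarrow> M \<subseteq> E \<and> (\<exists>v\<in>E. v \<notin> M \<and> E = adjoin sc M v)"
  unfolding codim1_def adjoin_def by simp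

lemma codim1_neq: "codim1 sc M E \<Longrightarrow> E \<noteq> M"
  unfolding codim1_def by blast

text \<open>Any vector of E outside the hyperplane M spans E modulo M; this needs the inverse of
  the coefficient of w, i.e. that K is a division ring.\<close>

lemma codim1_eq_adjoin:
  assumes M: "subsp sc M" and hyp: "codim1 sc M E" and w: "w \<in> E" "w \<notin> M"
  shows "E = adjoin sc M w"
proof
  from hyp obtain v where v: "v \<in> E" "E = adjoin sc M v" "M \<subseteq> E"
    unfolding codim1_iff_adjoin by blast
  have E: "subsp sc E"
    unfolding v(2) by (rule subsp_adjoin[OF M])
  show "adjoin sc M w \<subseteq> E"
    using adjoin_subset[OF E v(3) w(1)] .
  from w v(2) obtain k m where km: "w = sc k v + m" "m \<in> M"
    unfolding adjoin_def by blast
  have "k \<noteq> 0"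
    using km w(2) by auto
  then have v_eq: "v = sc (inverse k) w - sc (inverse k) m"
    using km(1) by (simp add: scale_right_distrib scale_inverse_cancel)
  show "E \<subseteq> adjoin sc M w"
  proof
    fix e assume "e \<in> E"
    then obtain l m' where lm: "e = sc l v + m'" "m' \<in> M"
      using v(2) unfolding adjoin_def by blast
    then have "e = sc (l * inverse k) w + (m' - sc l (sc (inverse k) m))"
      using v_eq by (simp add: scale_right_diff_distrib scale_scale algebra_simps)
    moreover have "m' - sc l (sc (inverse k) m) \<in> M"
      using subsp_diff[OF M lm(2)] subsp_scale[OF M] km(2) by blast
    ultimately show "e \<in> adjoin sc M w"
      unfolding adjoin_def by blast
  qed
qed

lemma codim1_no_intermediate:
  assumes M: "subsp sc M" and hyp: "codim1 sc M E"
    and F: "subsp sc F" "M \<subseteq> F" "F \<subseteq> E" "F \<noteq> M"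
  shows "F = E"
proof -
  obtain w where w: "w \<in> F" "w \<notin> M"
    using F by blast
  have "E = adjoin sc M w"
    using codim1_eq_adjoin[OF M hyp] w F by blast
  then show ?thesis
    using adjoin_subset F w by blast
qed

lemma codim1_ssum_imp_codim1_Int:
  assumes X: "subsp sc X" and Y: "subsp sc Y" and hyp: "codim1 sc X (ssum X Y)"
  shows "codim1 sc (X \<inter> Y) Y"
proof -
  have "\<not> Y \<subseteq> X"
    using ssum_absorb2[OF Y X] ssum_commute codim1_neq[OF hyp] by metis
  then obtain y where y: "y \<in> Y" "y \<notin> X"
    by blast
  have sum: "ssum X Y = adjoin sc X y"
    using codim1_eq_adjoin[OF X hyp _ y(2)] ssum_upper2[OF X] y(1) by blast
  have "Y = adjoin sc (X \<inter> Y) y"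
  proof
    show "adjoin sc (X \<inter> Y) y \<subseteq> Y"
      using adjoin_subset[OF Y _ y(1)] by blast
    show "Y \<subseteq> adjoin sc (X \<inter> Y) y"
    proof
      fix z assume z: "z \<in> Y"
      then obtain k m where km: "z = sc k y + m" "m \<in> X"
        using sum ssum_upper2[OF X] unfolding adjoin_def by blast
      then have "m = z - sc k y"
        by simp
      then have "m \<in> Y"
        using subsp_diff[OF Y z subsp_scale[OF Y y(1)]] by simp
      then show "z \<in> adjoin sc (X \<inter> Y) y"
        using km unfolding adjoin_def by blast
    qed
  qed
  then show ?thesis
    unfolding codim1_iff_adjoin using y by blast
qed

lemma adjacent_codim1_Int:
  assumes "subsp sc X" "subsp sc Y" "adjacent sc X Y"
  shows "codim1 sc (X \<inter> Y) X" "codim1 sc (X \<inter> Y) Y"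
proof -
  have "codim1 sc X (ssum X Y)" "codim1 sc Y (ssum Y X)"
    using assms(3) ssum_commute[of X Y] unfolding adjacent_def by auto
  then show "codim1 sc (X \<inter> Y) X" "codim1 sc (X \<inter> Y) Y"
    using codim1_ssum_imp_codim1_Int assms(1,2) Int_commute by metis+
qed

context
  fixes A B C :: "'v set"
  assumes A: "subsp sc A" and B: "subsp sc B" and C: "subsp sc C"
    and AB: "adjacent sc A B" and AC: "adjacent sc A C" and BC: "adjacent sc B C"
begin

lemma adjacent_triple_in_top:
  assumes "C \<subseteq> ssum A B"
  shows "A \<in> top sc (ssum A B)" "B \<in> top sc (ssum A B)" "C \<in> top sc (ssum A B)"
proof -
  have hyp_A: "codim1 sc A (ssum A B)" and hyp_B: "codim1 sc B (ssum A B)"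
    using AB unfolding adjacent_def by auto
  have BC_sub: "ssum B C \<subseteq> ssum A B"
    using ssum_least[OF subsp_ssum[OF A B] ssum_upper2[OF A] assms] .
  have BC_neq: "ssum B C \<noteq> B"
    using BC codim1_neq unfolding adjacent_def by blast
  have "ssum B C = ssum A B"
    by (rule codim1_no_intermediate[OF B hyp_B subsp_ssum[OF B C] ssum_upper1[OF C] BC_sub BC_neq])
  then have "codim1 sc C (ssum A B)"
    using BC unfolding adjacent_def by simp
  then show "A \<in> top sc (ssum A B)" "B \<in> top sc (ssum A B)" "C \<in> top sc (ssum A B)"
    using A B C hyp_A hyp_B assms ssum_upper1[OF B] ssum_upper2[OF A]
    unfolding top_def by auto
qed

lemma adjacent_triple_Int_subset:
  assumes c: "c \<in> C" "c \<notin> ssum A B"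
  shows "A \<inter> B \<subseteq> C"
proof
  fix x assume x: "x \<in> A \<inter> B"
  show "x \<in> C"
  proof (rule ccontr)
    assume x_C: "x \<notin> C"
    have "codim1 sc C (ssum A C)" "codim1 sc C (ssum B C)"
      using AC BC unfolding adjacent_def by auto
    moreover have "x \<in> ssum A C" "x \<in> ssum B C"
      using x ssum_upper1[OF C] by auto
    ultimately have "ssum A C = adjoin sc C x" "ssum B C = adjoin sc C x"
      using codim1_eq_adjoin[OF C _ _ x_C] by auto
    then have "B \<subseteq> ssum A C"
      using ssum_upper1[OF C, of B] by simp
    then have AB_sub: "ssum A B \<subseteq> ssum A C"
      using ssum_least[OF subsp_ssum[OF A C] ssum_upper1[OF C]] by blast
    have hyp_A: "codim1 sc A (ssum A C)" and AB_neq: "ssum A B \<noteq> A"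
      using AB AC codim1_neq unfolding adjacent_def by blast+
    have "ssum A B = ssum A C"
      by (rule codim1_no_intermediate[OF A hyp_A subsp_ssum[OF A B] ssum_upper1[OF B] AB_sub AB_neq])
    then show False
      using c ssum_upper2[OF A, of C] by blast
  qed
qed

lemma adjacent_triple_in_star:
  assumes "\<not> C \<subseteq> ssum A B"
  shows "A \<in> star sc (A \<inter> B)" "B \<in> star sc (A \<inter> B)" "C \<in> star sc (A \<inter> B)"
proof -
  have ABC: "A \<inter> B \<subseteq> C"
    using adjacent_triple_Int_subset assms by blast
  have hyp_A: "codim1 sc (A \<inter> B) A" and hyp_B: "codim1 sc (A \<inter> B) B"
    using adjacent_codim1_Int[OF A B AB] by auto
  have "B \<inter> C \<noteq> B"
    using BC codim1_neq ssum_absorb2[OF B C] unfolding adjacent_def by blast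
  then have "B \<inter> C = A \<inter> B"
    using codim1_no_intermediate[OF subsp_Int[OF A B] hyp_B subsp_Int[OF B C]] ABC by blast
  then have "codim1 sc (A \<inter> B) C"
    using adjacent_codim1_Int[OF B C BC] by simp
  then show "A \<in> star sc (A \<inter> B)" "B \<in> star sc (A \<inter> B)" "C \<in> star sc (A \<inter> B)"
    using A B C hyp_A hyp_B ABC unfolding star_def by auto
qed

end

end

theorem lemma2p3:
  fixes sc :: "'k::division_ring \<Rightarrow> 'v::ab_group_add \<Rightarrow> 'v"
  assumes "left_vs sc"
    and "dim_gt2 sc"
    and "GG sc \<noteq> {}"
    and "A \<in> GG sc" and "B \<in> GG sc" and "C \<in> GG sc"
    and "adjacent sc A B" and "adjacent sc A C" and "adjacent sc B C"
  shows "\<exists>S. (is_star sc S \<or> is_top sc S) \<and> A \<in> S \<and> B \<in> S \<and> C \<in> S"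
proof -
  interpret left_vector_space sc
    using assms(1) by unfold_locales
  have A: "subsp sc A" and B: "subsp sc B" and C: "subsp sc C"
    using assms(4-6) unfolding GG_def by auto
  note triple = A B C assms(7-9)
  show ?thesis
  proof (cases "C \<subseteq> ssum A B")
    case True
    have "is_top sc (top sc (ssum A B))"
      using subsp_ssum[OF A B] assms(4) adjacent_triple_in_top[OF triple True]
      unfolding is_top_def top_def by blast
    then show ?thesis
      using adjacent_triple_in_top[OF triple True] by blast
  next
    case False
    have "is_star sc (star sc (A \<inter> B))"
      using subsp_Int[OF A B] assms(4) adjacent_codim1_Int[OF A B assms(7)] by (auto simp: is_star_def)
    then show ?thesis
      using adjacent_triple_in_star[OF triple False] by blast
  qed
qed

end
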